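(* Let $p\ge1$ and let $\mathcal A=(A_n)_{n\ge0}$ be a sequence of positive invertible $p\times p$ matrices with $\sup_n\|A_n\|<\infty$ such that the matrix-valued weighted shift $W_{\mathcal A}$ on $\ell^2(\mathbb C^p)$ is quadratically hyponormal. If $A_n=A_{n+1}$ for some $n\ge1$, then $W_{\mathcal A}$ is flat, i.e. $A_k=A_1$ for every $k\ge1$.
   Context: $\ell^2(\mathbb C^p)=\{(x_n)_{n\ge0}: x_n\in\mathbb C^p,\ \sum_n\|x_n\|^2<\infty\}$; the matrix-valued weighted shift is $W_{\mathcal A}(x_0,x_1,\dots)=(0,A_0x_0,A_1x_1,\dots)$. A bounded operator $T$ is hyponormal if $T^*T-TT^*\ge0$, and quadratically hyponormal if $T+\lambda T^2$ is hyponormal for every $\lambda\in\mathbb C$. The shift is flat if $A_k=A_1$ for all $k\ge1$. *)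

theory Defs
  imports "HOL-Analysis.Analysis"
begin

text \<open>Vectors in C^p are modelled as complex^'p with 'p a finite type (so p = CARD('p) >= 1),
  p x p matrices as complex^'p^'p.\<close>

definition cinner :: "complex^'p \<Rightarrow> complex^'p \<Rightarrow> complex" where
  "cinner x y = (\<Sum>i\<in>UNIV. x$i * cnj (y$i))"

definition pos_mat :: "complex^'p^'p \<Rightarrow> bool" where
  "pos_mat A \<longleftrightarrow> (\<forall>x. Im (cinner (A *v x) x) = 0 \<and> Re (cinner (A *v x) x) \<ge> 0)"

definition l2seq :: "(nat \<Rightarrow> complex^'p) \<Rightarrow> bool" where
  "l2seq x \<longleftrightarrow> summable (\<lambda>n. (norm (x n))\<^sup>2)"

definition l2inner :: "(nat \<Rightarrow> complex^'p) \<Rightarrow> (nat \<Rightarrow> complex^'p) \<Rightarrow> complex" where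
  "l2inner x y = (\<Sum>n. cinner (x n) (y n))"

type_synonym ('p) l2op = "(nat \<Rightarrow> complex^'p) \<Rightarrow> (nat \<Rightarrow> complex^'p)"

definition is_adjoint :: "('p::finite) l2op \<Rightarrow> 'p l2op \<Rightarrow> bool" where
  "is_adjoint T S \<longleftrightarrow> (\<forall>x. l2seq x \<longrightarrow> l2seq (S x)) \<and>
     (\<forall>x y. l2seq x \<longrightarrow> l2seq y \<longrightarrow> l2inner (T x) y = l2inner x (S y))"

definition hyponormal :: "('p::finite) l2op \<Rightarrow> bool" where
  "hyponormal T \<longleftrightarrow> (\<forall>x. l2seq x \<longrightarrow> l2seq (T x)) \<and>
     (\<exists>S. is_adjoint T S \<and>
        (\<forall>x. l2seq x \<longrightarrow>
           (let q = l2inner (\<lambda>n. S (T x) n - T (S x) n) x in Im q = 0 \<and> Re q \<ge> 0)))"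

definition quad_hyponormal :: "('p::finite) l2op \<Rightarrow> bool" where
  "quad_hyponormal T \<longleftrightarrow> (\<forall>c::complex. hyponormal (\<lambda>x n. T x n + c *s T (T x) n))"

definition mshift :: "(nat \<Rightarrow> complex^'p^'p) \<Rightarrow> ('p::finite) l2op" where
  "mshift A x = (\<lambda>n. if n = 0 then 0 else A (n - 1) *v x (n - 1))"

end

theory Submission
  imports Defs
begin

(* Quadratic hyponormality says that |T* x| <= |T x| for T = W + t W^2 and every real t.
   Suppose a = A (m+1) = A (m+2) and write e = A (m+3).  Test the inequality on the vector
   supported on m, ..., m+4 with entries (t^2 p, -t w, u, -t w, t^2 e w), where a u = w and
   A m p = a^2 w.  The components m+4, m+5 of T x vanish and the terms of order t^2 cancel,
   so the t^4 terms are dominated by terms of order t^6; letting t -> 0 gives e^2 w = a^2 w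
   and, if m > 0, A (m-1) (p - A m w) = 0, i.e. (A m)^2 w = a^2 w.  Positive square roots
   being unique, A (m+3) = a and A m = a: a pair of equal neighbours spreads in both
   directions.  Only finitely supported vectors are tested. *)

lemma nonpos_if_le_scaled:
  fixes D K :: real
  assumes "\<And>s. 0 < s \<Longrightarrow> D \<le> s * K"
  shows "D \<le> 0"
proof (rule field_le_epsilon)
  fix e :: real
  assume "0 < e"
  define s where "s = e / (\<bar>K\<bar> + 1)"
  have "0 < s"
    using \<open>0 < e\<close> by (simp add: s_def)
  have "s * K \<le> s * (\<bar>K\<bar> + 1)"
    using \<open>0 < s\<close> by (intro mult_left_mono) auto
  also have "\<dots> = e"
    by (simp add: s_def)
  finally show "D \<le> 0 + e"
    using assms[OF \<open>0 < s\<close>] by simp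
qed

lemma nonpos_if_power4_le_power6:
  fixes D K :: real
  assumes "\<And>t. t ^ 4 * D \<le> t ^ 6 * K"
  shows "D \<le> 0"
proof (rule nonpos_if_le_scaled)
  fix s :: real
  assume "0 < s"
  have "sqrt s ^ 4 = (sqrt s ^ 2) ^ 2" "sqrt s ^ 6 = (sqrt s ^ 2) ^ 2 * sqrt s ^ 2"
    by (simp_all flip: power_mult power_add)
  then have "s\<^sup>2 * D \<le> s\<^sup>2 * (s * K)"
    using assms[of "sqrt s"] \<open>0 < s\<close> by (simp add: mult.assoc)
  then show "D \<le> s * K"
    using \<open>0 < s\<close> by simp
qed

lemma power2_norm_scaleR_add:
  fixes x y :: "'a::real_inner"
  shows "(norm (r *\<^sub>R x + s *\<^sub>R y))\<^sup>2 = r\<^sup>2 * (norm x)\<^sup>2 + 2 * r * s * inner x y + s\<^sup>2 * (norm y)\<^sup>2"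
  unfolding power2_norm_eq_inner
  by (simp add: inner_add_left inner_add_right inner_commute[of y x] power2_eq_square algebra_simps)

lemma power2_norm_diff:
  fixes x y :: "'a::real_inner"
  shows "(norm (x - y))\<^sup>2 = (norm x)\<^sup>2 - 2 * inner x y + (norm y)\<^sup>2"
  unfolding power2_norm_eq_inner
  by (simp add: inner_diff_left inner_diff_right inner_commute[of y x])

lemma matrix_vector_mult_uminus:
  fixes M :: "'a::ring_1^'n^'m"
  shows "M *v (- x) = - (M *v x)"
  by (simp add: matrix_vector_mult_def vec_eq_iff sum_negf)

lemma of_real_scalar_mult: "complex_of_real r *s x = r *\<^sub>R x"
  by (simp add: vec_eq_iff vector_scalar_mult_def scaleR_vec_def scaleR_conv_of_real)

lemma matrix_vector_mult_scaleR_complex: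
  fixes M :: "complex^'n^'m"
  shows "M *v (r *\<^sub>R x) = r *\<^sub>R (M *v x)"
  by (metis of_real_scalar_mult vector_scalar_commute)

lemma matrix_vector_mult_axis: "(M *v axis i 1) $ k = M $ k $ i"
  by (simp add: matrix_vector_mult_def axis_def if_distrib cong: if_cong)

lemma invertible_surj:
  fixes M :: "'a::field^'n^'n"
  shows "invertible M \<Longrightarrow> \<exists>x. M *v x = y"
  by (metis invertible_def matrix_right_invertible_surjective surjD)

lemma cinner_add_left: "cinner (x + y) z = cinner x z + cinner y z"
  by (simp add: cinner_def sum.distrib distrib_right)

lemma cinner_add_right: "cinner z (x + y) = cinner z x + cinner z y"
  by (simp add: cinner_def sum.distrib distrib_left)

lemma cinner_diff_left: "cinner (x - y) z = cinner x z - cinner y z"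
  by (simp add: cinner_def sum_subtractf left_diff_distrib)

lemma cinner_scalar_left: "cinner (c *s x) y = c * cinner x y"
  by (simp add: cinner_def sum_distrib_left mult.assoc)

lemma cinner_scalar_right: "cinner x (c *s y) = cnj c * cinner x y"
  by (simp add: cinner_def sum_distrib_left mult_ac)

lemma cnj_cinner: "cnj (cinner x y) = cinner y x"
  by (simp add: cinner_def mult.commute)

lemma Re_cinner: "Re (cinner x y) = inner x y"
  by (simp add: cinner_def inner_vec_def inner_complex_def)

lemma cinner_self: "cinner x x = of_real ((norm x)\<^sup>2)"
proof -
  have "Im (cinner x x) = 0"
    by (simp add: cinner_def Im_sum)
  then show ?thesis
    by (simp add: complex_eq_iff Re_cinner power2_norm_eq_inner)
qed

lemma cinner_axis_right: "cinner x (axis i 1) = x $ i"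
  by (simp add: cinner_def axis_def if_distrib cong: if_cong)

lemma cinner_eqI:
  assumes "\<And>v. cinner v x = cinner v y"
  shows "x = y"
proof -
  have "x $ i = y $ i" for i
    using assms[of "axis i 1"] by (metis cinner_axis_right cnj_cinner)
  then show ?thesis
    by (simp add: vec_eq_iff)
qed

section \<open>Positive matrices and their square roots\<close>

definition hermitian_mat :: "complex^'n^'n \<Rightarrow> bool" where
  "hermitian_mat M \<longleftrightarrow> (\<forall>x y. cinner (M *v x) y = cinner x (M *v y))"

lemma pos_mat_hermitian:
  fixes M :: "complex^'n^'n"
  assumes "pos_mat M"
  shows "hermitian_mat M"
  unfolding hermitian_mat_def
proof (intro allI)
  fix x y :: "complex^'n"
  have real: "\<And>z. Im (cinner (M *v z) z) = 0"
    using assms unfolding pos_mat_def by blast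
  define a where "a = cinner (M *v x) y"
  define b where "b = cinner (M *v y) x"
  have "Im (a + b) = 0"
    using real[of "x + y"] real[of x] real[of y]
    by (simp add: matrix_vector_right_distrib cinner_add_left cinner_add_right a_def b_def)
  moreover have "Re b - Re a = 0"
    using real[of "x + \<i> *s y"] real[of x] real[of y]
    by (simp add: matrix_vector_right_distrib cinner_add_left cinner_add_right a_def b_def
        vector_scalar_commute cinner_scalar_left cinner_scalar_right)
  ultimately have "a = cnj b"
    by (simp add: complex_eq_iff)
  then show "cinner (M *v x) y = cinner x (M *v y)"
    by (simp add: a_def b_def cnj_cinner)
qed

lemma hermitian_mat_inner:
  "hermitian_mat M \<Longrightarrow> inner (M *v x) y = inner x (M *v y)"
  unfolding hermitian_mat_def by (metis Re_cinner)

lemma pos_mat_inner_nonneg: "pos_mat M \<Longrightarrow> 0 \<le> inner (M *v x) x"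
  unfolding pos_mat_def by (metis Re_cinner)

text \<open>With z = M y the form at y + r z is 2 r |z|^2 + r^2 <M z, z>, which is negative for
  small r < 0 unless z = 0.\<close>
lemma pos_mat_definite:
  assumes pos: "pos_mat M" and inv: "invertible M" and zero: "inner (M *v y) y = 0"
  shows "y = 0"
proof -
  define z where "z = M *v y"
  have cross: "inner (M *v z) y = inner z z"
    using hermitian_mat_inner[OF pos_mat_hermitian[OF pos], of z y]
    by (simp add: z_def inner_commute)
  have "0 \<le> inner (M *v (y + r *\<^sub>R z)) (y + r *\<^sub>R z)" for r
    by (rule pos_mat_inner_nonneg[OF pos])
  then have quadratic: "0 \<le> 2 * r * inner z z + r\<^sup>2 * inner (M *v z) z" for r
    using zero cross
    by (simp add: matrix_vector_right_distrib matrix_vector_mult_scaleR_complex inner_add_left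
        inner_add_right inner_commute[of y] z_def[symmetric] power2_eq_square algebra_simps)
  then have "inner z z \<le> s * (inner (M *v z) z / 2)" if "0 < s" for s
  proof -
    have "s * (2 * inner z z) \<le> s * (s * inner (M *v z) z)"
      using quadratic[of "- s"]
      by (simp add: power2_eq_square algebra_simps)
    then show ?thesis
      using that by simp
  qed
  then have "inner z z \<le> 0"
    by (rule nonpos_if_le_scaled)
  then have "z = 0"
    by (metis inner_eq_zero_iff inner_ge_zero order_antisym)
  then show ?thesis
    using inj_matrix_vector_mult[OF inv] unfolding z_def by (metis injD matrix_vector_mult_0_right)
qed

text \<open>Both sides are the trace of X a X^*.\<close>
lemma sum_cinner_columns_eq_rows:
  fixes X a :: "complex^'n^'n"
  shows "(\<Sum>i\<in>UNIV. cinner (X *v (a *v axis i 1)) (X *v axis i 1)) =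
         (\<Sum>j\<in>UNIV. cinner (a *v (\<chi> i. cnj (X$j$i))) (\<chi> i. cnj (X$j$i)))"
proof -
  have "(\<Sum>i\<in>UNIV. cinner (X *v (a *v axis i 1)) (X *v axis i 1)) =
        (\<Sum>i\<in>UNIV. \<Sum>j\<in>UNIV. \<Sum>k\<in>UNIV. X$j$k * a$k$i * cnj (X$j$i))"
    unfolding cinner_def matrix_vector_mult_axis
    by (simp add: matrix_vector_mult_def[of X] matrix_vector_mult_axis sum_distrib_right)
  also have "\<dots> = (\<Sum>j\<in>UNIV. \<Sum>i\<in>UNIV. \<Sum>k\<in>UNIV. X$j$k * a$k$i * cnj (X$j$i))"
    by (rule sum.swap)
  also have "\<dots> = (\<Sum>j\<in>UNIV. \<Sum>k\<in>UNIV. \<Sum>i\<in>UNIV. X$j$k * a$k$i * cnj (X$j$i))"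
    by (rule sum.cong[OF refl], rule sum.swap)
  also have "\<dots> = (\<Sum>j\<in>UNIV. cinner (a *v (\<chi> i. cnj (X$j$i))) (\<chi> i. cnj (X$j$i)))"
    by (simp add: cinner_def matrix_vector_mult_def sum_distrib_right sum_distrib_left mult_ac)
  finally show ?thesis .
qed

text \<open>With X = e - a we have e X + X a = 0, so the trace of X^* e X is minus the trace
  of X a X^*.  Both are nonnegative, hence zero, and definiteness of e kills every
  column of X.\<close>
lemma pos_mat_sqrt_unique:
  fixes e a :: "complex^'n^'n"
  assumes pe: "pos_mat e" and ie: "invertible e" and pa: "pos_mat a"
    and sq: "e ** e = a ** a"
  shows "e = a"
proof -
  define X where "X = e - a"
  have "e *v (e *v v) = a *v (a *v v)" for v
    by (simp add: matrix_vector_mul_assoc sq)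
  then have XI: "e *v (X *v v) + X *v (a *v v) = 0" for v
    by (simp add: X_def matrix_vector_mult_diff_rdistrib matrix_vector_mult_diff_distrib)
  define col where "col i = X *v axis i 1" for i
  define row where "row j = (\<chi> i. cnj (X$j$i))" for j
  have "(\<Sum>i\<in>UNIV. inner (e *v col i) (col i)) + (\<Sum>j\<in>UNIV. inner (a *v row j) (row j))
      = Re (\<Sum>i\<in>UNIV. cinner (e *v (X *v axis i 1) + X *v (a *v axis i 1)) (X *v axis i 1))"
    using sum_cinner_columns_eq_rows[of X a]
    by (simp add: col_def row_def cinner_add_left sum.distrib Re_sum Re_cinner)
  also have "\<dots> = 0"
    by (simp add: XI cinner_def)
  finally have sum0: "(\<Sum>i\<in>UNIV. inner (e *v col i) (col i))
      + (\<Sum>j\<in>UNIV. inner (a *v row j) (row j)) = 0" .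
  have col_nonneg: "0 \<le> inner (e *v col i) (col i)" for i
    by (rule pos_mat_inner_nonneg[OF pe])
  have "0 \<le> (\<Sum>j\<in>UNIV. inner (a *v row j) (row j))"
    by (rule sum_nonneg) (rule pos_mat_inner_nonneg[OF pa])
  moreover have "0 \<le> (\<Sum>i\<in>UNIV. inner (e *v col i) (col i))"
    by (rule sum_nonneg) (rule col_nonneg)
  ultimately have "(\<Sum>i\<in>UNIV. inner (e *v col i) (col i)) = 0"
    using sum0 by linarith
  then have "inner (e *v col i) (col i) = 0" for i
    using col_nonneg by (simp add: sum_nonneg_eq_0_iff)
  then have "col i = 0" for i
    using pos_mat_definite[OF pe ie] by blast
  then have "X = 0"
    by (simp add: col_def vec_eq_iff flip: matrix_vector_mult_axis)
  then show ?thesis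
    by (simp add: X_def)
qed

section \<open>Hyponormality tested on finitely supported sequences\<close>

lemma l2seq_finite_support: "(\<And>k. N \<le> k \<Longrightarrow> x k = 0) \<Longrightarrow> l2seq x"
  unfolding l2seq_def by (rule summable_finite[of "{..<N}"]) auto

lemma l2inner_finite_support_left:
  "(\<And>k. N \<le> k \<Longrightarrow> x k = 0) \<Longrightarrow> l2inner x y = (\<Sum>k<N. cinner (x k) (y k))"
  unfolding l2inner_def by (rule suminf_finite) (auto simp: cinner_def)

lemma l2inner_finite_support_right:
  "(\<And>k. N \<le> k \<Longrightarrow> y k = 0) \<Longrightarrow> l2inner x y = (\<Sum>k<N. cinner (x k) (y k))"
  unfolding l2inner_def by (rule suminf_finite) (auto simp: cinner_def)

lemma l2inner_self: "l2seq x \<Longrightarrow> l2inner x x = of_real (\<Sum>n. (norm (x n))\<^sup>2)"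
  unfolding l2seq_def l2inner_def cinner_self by (rule suminf_of_real[symmetric])

text \<open>For finitely supported x the form <S T x, x> - <T S x, x> is a finite sum, and the
  adjoint identity turns it into |T x|^2 - |S x|^2.\<close>
lemma hyponormal_adjoint_norm_le:
  assumes "hyponormal T"
  obtains S where "is_adjoint T S"
    and "\<And>x N. (\<And>k. N \<le> k \<Longrightarrow> x k = 0) \<Longrightarrow> (\<Sum>n. (norm (S x n))\<^sup>2) \<le> (\<Sum>n. (norm (T x n))\<^sup>2)"
proof -
  obtain S where Tl2: "\<And>x. l2seq x \<Longrightarrow> l2seq (T x)" and adj: "is_adjoint T S"
    and pos: "\<And>x. l2seq x \<Longrightarrow> 0 \<le> Re (l2inner (\<lambda>n. S (T x) n - T (S x) n) x)"
    using assms unfolding hyponormal_def Let_def by blast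
  have Sl2: "\<And>x. l2seq x \<Longrightarrow> l2seq (S x)"
    and adjI: "\<And>x y. l2seq x \<Longrightarrow> l2seq y \<Longrightarrow> l2inner (T x) y = l2inner x (S y)"
    using adj unfolding is_adjoint_def by blast+
  show thesis
  proof (rule that[OF adj])
    fix x :: "nat \<Rightarrow> complex^'a" and N
    assume fin: "\<And>k. N \<le> k \<Longrightarrow> x k = 0"
    have lx: "l2seq x"
      by (rule l2seq_finite_support[OF fin])
    have "(\<Sum>n<N. cinner (S (T x) n) (x n)) = cnj (\<Sum>n<N. cinner (x n) (S (T x) n))"
      by (simp add: cnj_cinner)
    also have "(\<Sum>n<N. cinner (x n) (S (T x) n)) = l2inner (T x) (T x)"
      using l2inner_finite_support_left[OF fin] adjI[OF lx Tl2[OF lx]] by simp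
    finally have STx: "(\<Sum>n<N. cinner (S (T x) n) (x n)) = cnj (l2inner (T x) (T x))" .
    have TSx: "(\<Sum>n<N. cinner (T (S x) n) (x n)) = l2inner (S x) (S x)"
      using l2inner_finite_support_right[OF fin] adjI[OF Sl2[OF lx] lx] by simp
    have "0 \<le> Re (l2inner (\<lambda>n. S (T x) n - T (S x) n) x)"
      by (rule pos[OF lx])
    also have "\<dots> = Re (cnj (l2inner (T x) (T x)) - l2inner (S x) (S x))"
      by (simp add: l2inner_finite_support_right[OF fin] cinner_diff_left sum_subtractf STx TSx)
    finally show "(\<Sum>n. (norm (S x n))\<^sup>2) \<le> (\<Sum>n. (norm (T x n))\<^sup>2)"
      by (simp add: l2inner_self lx Tl2 Sl2)
  qed
qed

lemma mshift_0 [simp]: "mshift A x 0 = 0"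
  by (simp add: mshift_def)

lemma mshift_Suc [simp]: "mshift A x (Suc n) = A n *v x n"
  by (simp add: mshift_def)

text \<open>The adjoint is read off by pairing with sequences supported at a single index.\<close>
lemma adjoint_mshift_quadratic:
  fixes A :: "nat \<Rightarrow> complex^'p^'p"
  assumes herm: "\<And>k. hermitian_mat (A k)"
    and adj: "is_adjoint (\<lambda>x n. mshift A x n + complex_of_real t *s mshift A (mshift A x) n) S"
    and lx: "l2seq x"
  shows "S x k = A k *v x (Suc k) + complex_of_real t *s (A k *v (A (Suc k) *v x (Suc (Suc k))))"
proof (rule cinner_eqI)
  fix v
  define d where "d = (\<lambda>j. if j = k then v else (0::complex^'p))"
  have ld: "l2seq d"
    by (rule l2seq_finite_support[of "Suc k"]) (simp add: d_def)
  have "cinner v (S x k) = l2inner d (S x)"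
    unfolding l2inner_def by (subst suminf_finite[of "{k}"]) (auto simp: d_def cinner_def)
  also have "\<dots> = l2inner (\<lambda>n. mshift A d n + complex_of_real t *s mshift A (mshift A d) n) x"
    using adj ld lx unfolding is_adjoint_def by simp
  also have "(\<lambda>n. mshift A d n + complex_of_real t *s mshift A (mshift A d) n)
      = (\<lambda>n. (if n = Suc k then A k *v v else 0)
          + complex_of_real t *s (if n = Suc (Suc k) then A (Suc k) *v (A k *v v) else 0))"
    by (rule ext) (auto simp: mshift_def d_def)
  also have "l2inner \<dots> x = cinner (A k *v v) (x (Suc k))
      + cinner (complex_of_real t *s (A (Suc k) *v (A k *v v))) (x (Suc (Suc k)))"
    unfolding l2inner_def
    by (subst suminf_finite[of "{Suc k, Suc (Suc k)}"]) (auto simp: cinner_add_left cinner_def)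
  also have "\<dots> = cinner v (A k *v x (Suc k)
      + complex_of_real t *s (A k *v (A (Suc k) *v x (Suc (Suc k)))))"
    using herm unfolding hermitian_mat_def
    by (simp add: cinner_add_right cinner_scalar_left cinner_scalar_right)
  finally show "cinner v (S x k) = cinner v (A k *v x (Suc k)
      + complex_of_real t *s (A k *v (A (Suc k) *v x (Suc (Suc k)))))" .
qed

lemma quad_hyponormal_mshift_le:
  fixes A :: "nat \<Rightarrow> complex^'p^'p" and t :: real
  assumes herm: "\<And>k. hermitian_mat (A k)" and qh: "quad_hyponormal (mshift A)"
    and fin: "\<And>k. N \<le> k \<Longrightarrow> x k = 0" and "finite K" "finite J"
    and J: "\<And>j. j \<notin> J \<Longrightarrow> mshift A x j + t *\<^sub>R mshift A (mshift A x) j = 0"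
  shows "(\<Sum>k\<in>K. (norm (A k *v x (Suc k) + t *\<^sub>R (A k *v (A (Suc k) *v x (Suc (Suc k))))))\<^sup>2)
    \<le> (\<Sum>j\<in>J. (norm (mshift A x j + t *\<^sub>R mshift A (mshift A x) j))\<^sup>2)"
proof -
  define T where "T = (\<lambda>x n. mshift A x n + complex_of_real t *s mshift A (mshift A x) n)"
  have "hyponormal T"
    using qh unfolding quad_hyponormal_def T_def by blast
  then obtain S where adj: "is_adjoint T S"
    and le: "(\<Sum>n. (norm (S x n))\<^sup>2) \<le> (\<Sum>n. (norm (T x n))\<^sup>2)"
    using hyponormal_adjoint_norm_le fin by metis
  have lx: "l2seq x"
    by (rule l2seq_finite_support[OF fin])
  have "summable (\<lambda>n. (norm (S x n))\<^sup>2)"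
    using adj lx unfolding is_adjoint_def l2seq_def by blast
  then have "(\<Sum>k\<in>K. (norm (S x k))\<^sup>2) \<le> (\<Sum>n. (norm (S x n))\<^sup>2)"
    using \<open>finite K\<close> by (rule sum_le_suminf) simp
  also note le
  also have "(\<Sum>n. (norm (T x n))\<^sup>2) = (\<Sum>j\<in>J. (norm (T x j))\<^sup>2)"
    by (rule suminf_finite[OF \<open>finite J\<close>]) (simp add: T_def of_real_scalar_mult J)
  finally show ?thesis
    using adjoint_mshift_quadratic[OF herm adj[unfolded T_def] lx]
    by (simp add: T_def of_real_scalar_mult)
qed

section \<open>Propagation of equal weights\<close>

definition flat_test_vector ::
    "nat \<Rightarrow> real \<Rightarrow> complex^'p \<Rightarrow> complex^'p \<Rightarrow> complex^'p \<Rightarrow> complex^'p \<Rightarrow> nat \<Rightarrow> complex^'p" where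
  "flat_test_vector m t p w u q k =
    (if k = m then t\<^sup>2 *\<^sub>R p else if k = Suc m then (- t) *\<^sub>R w
     else if k = Suc (Suc m) then u else if k = Suc (Suc (Suc m)) then (- t) *\<^sub>R w
     else if k = Suc (Suc (Suc (Suc m))) then t\<^sup>2 *\<^sub>R q else 0)"

lemma flat_test_vector_simps:
  "flat_test_vector m t p w u q m = t\<^sup>2 *\<^sub>R p"
  "flat_test_vector m t p w u q (Suc m) = (- t) *\<^sub>R w"
  "flat_test_vector m t p w u q (Suc (Suc m)) = u"
  "flat_test_vector m t p w u q (Suc (Suc (Suc m))) = (- t) *\<^sub>R w"
  "flat_test_vector m t p w u q (Suc (Suc (Suc (Suc m)))) = t\<^sup>2 *\<^sub>R q"
  "flat_test_vector m t p w u q (Suc (Suc (Suc (Suc (Suc m))))) = 0"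
  "k < m \<Longrightarrow> flat_test_vector m t p w u q k = 0"
  by (simp_all add: flat_test_vector_def)

lemma flat_test_vector_eq_0:
  "Suc (Suc (Suc (Suc (Suc m)))) \<le> k \<Longrightarrow> flat_test_vector m t p w u q k = 0"
  by (simp add: flat_test_vector_def)

lemma mshift_quadratic_flat_test_vector:
  fixes A :: "nat \<Rightarrow> complex^'p^'p" and t :: real
  assumes a: "A (Suc m) = a" "A (Suc (Suc m)) = a" and u: "a *v u = w"
    and p: "A m *v p = a *v (a *v w)" and q: "A (Suc (Suc (Suc m))) *v w = q"
    and x_def: "x = flat_test_vector m t p w u q"
    and T_def: "\<And>j. T j = mshift A x j + t *\<^sub>R mshift A (mshift A x) j"
  shows "T (Suc m) = t\<^sup>2 *\<^sub>R (a *v (a *v w))"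
    and "T (Suc (Suc m)) = (- t) *\<^sub>R (a *v w) + (t ^ 3) *\<^sub>R (a *v (a *v (a *v w)))"
    and "T (Suc (Suc (Suc m))) = a *v u - t\<^sup>2 *\<^sub>R (a *v (a *v w))"
    and "T (Suc (Suc (Suc (Suc (Suc (Suc m)))))) =
      t ^ 3 *\<^sub>R (A (Suc (Suc (Suc (Suc (Suc m))))) *v (A (Suc (Suc (Suc (Suc m)))) *v q))"
    and "j \<notin> {Suc m, Suc (Suc m), Suc (Suc (Suc m)), Suc (Suc (Suc (Suc (Suc (Suc m)))))} \<Longrightarrow> T j = 0"
proof -
  note x = flat_test_vector_simps[where m = m and t = t and p = p and w = w and u = u and q = q,
      folded x_def]
  have Wx_m: "mshift A x m = 0"
    using x(7) by (cases m) simp_all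
  show "T (Suc m) = t\<^sup>2 *\<^sub>R (a *v (a *v w))"
    by (simp add: T_def Wx_m x matrix_vector_mult_scaleR_complex matrix_vector_mult_uminus p)
  show "T (Suc (Suc m)) = (- t) *\<^sub>R (a *v w) + (t ^ 3) *\<^sub>R (a *v (a *v (a *v w)))"
    by (simp add: T_def x matrix_vector_mult_scaleR_complex matrix_vector_mult_uminus a p
        power2_eq_square power3_eq_cube)
  show "T (Suc (Suc (Suc m))) = a *v u - t\<^sup>2 *\<^sub>R (a *v (a *v w))"
    by (simp add: T_def x matrix_vector_mult_scaleR_complex matrix_vector_mult_uminus a power2_eq_square)
  show "T (Suc (Suc (Suc (Suc (Suc (Suc m)))))) =
      t ^ 3 *\<^sub>R (A (Suc (Suc (Suc (Suc (Suc m))))) *v (A (Suc (Suc (Suc (Suc m)))) *v q))"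
    by (simp add: T_def x matrix_vector_mult_scaleR_complex matrix_vector_mult_uminus
        power2_eq_square power3_eq_cube mult.assoc)
  assume "j \<notin> {Suc m, Suc (Suc m), Suc (Suc (Suc m)), Suc (Suc (Suc (Suc (Suc (Suc m)))))}"
  then consider "j \<le> m" | "j = Suc (Suc (Suc (Suc m)))" | "j = Suc (Suc (Suc (Suc (Suc m))))"
    | "Suc (Suc (Suc (Suc (Suc (Suc (Suc m)))))) \<le> j"
    by (simp; linarith)
  then show "T j = 0"
  proof cases
    case 1
    then show ?thesis
      using x(7) by (auto simp: T_def mshift_def)
  next
    case 2
    then show ?thesis
      by (simp add: T_def x matrix_vector_mult_scaleR_complex matrix_vector_mult_uminus a u)
  next
    case 3
    then show ?thesis
      by (simp add: T_def x matrix_vector_mult_scaleR_complex matrix_vector_mult_uminus q power2_eq_square)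
  next
    case 4
    then show ?thesis
      by (auto simp: T_def mshift_def x_def flat_test_vector_eq_0)
  qed
qed

lemma mshift_adjoint_flat_test_vector:
  fixes A :: "nat \<Rightarrow> complex^'p^'p" and t :: real and p w u q :: "complex^'p"
  assumes a: "A (Suc m) = a" "A (Suc (Suc m)) = a"
    and x_def: "x = flat_test_vector m t p w u q"
    and S_def: "\<And>k. S k = A k *v x (Suc k) + t *\<^sub>R (A k *v (A (Suc k) *v x (Suc (Suc k))))"
  shows "m = Suc n \<Longrightarrow> S n = t\<^sup>2 *\<^sub>R (A n *v (p - A m *v w))"
    and "S (Suc m) = a *v u - t\<^sup>2 *\<^sub>R (a *v (a *v w))"
    and "S (Suc (Suc m)) = (- t) *\<^sub>R (a *v w) + t ^ 3 *\<^sub>R (a *v (A (Suc (Suc (Suc m))) *v q))"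
    and "S (Suc (Suc (Suc m))) = t\<^sup>2 *\<^sub>R (A (Suc (Suc (Suc m))) *v q)"
proof -
  note x = flat_test_vector_simps[where m = m and t = t and p = p and w = w and u = u and q = q,
      folded x_def]
  show "m = Suc n \<Longrightarrow> S n = t\<^sup>2 *\<^sub>R (A n *v (p - A m *v w))"
    using x by (simp add: S_def matrix_vector_mult_scaleR_complex matrix_vector_mult_uminus
        matrix_vector_mult_diff_distrib scaleR_diff_right power2_eq_square)
  show "S (Suc m) = a *v u - t\<^sup>2 *\<^sub>R (a *v (a *v w))"
    and "S (Suc (Suc m)) = (- t) *\<^sub>R (a *v w) + t ^ 3 *\<^sub>R (a *v (A (Suc (Suc (Suc m))) *v q))"
    and "S (Suc (Suc (Suc m))) = t\<^sup>2 *\<^sub>R (A (Suc (Suc (Suc m))) *v q)"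
    by (simp_all add: S_def x a matrix_vector_mult_scaleR_complex matrix_vector_mult_uminus
        power2_eq_square power3_eq_cube mult.assoc)
qed

lemma flat_step_estimate:
  fixes A :: "nat \<Rightarrow> complex^'p^'p"
  assumes herm: "\<And>k. hermitian_mat (A k)" and qh: "quad_hyponormal (mshift A)"
    and a: "A (Suc m) = a" "A (Suc (Suc m)) = a" and u: "a *v u = w"
    and p: "A m *v p = a *v (a *v w)"
  defines "e \<equiv> A (Suc (Suc (Suc m)))"
  obtains K where "\<And>t::real.
    t ^ 4 * ((if m = 0 then 0 else (norm (A (m - 1) *v (p - A m *v w)))\<^sup>2)
      + (norm (e *v (e *v w) - a *v (a *v w)))\<^sup>2) \<le> t ^ 6 * K"
proof -
  define q where "q = e *v w"
  define f where "f = A (Suc (Suc (Suc (Suc m))))"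
  define g where "g = A (Suc (Suc (Suc (Suc (Suc m)))))"
  define Y where "Y = (if m = 0 then 0 else (norm (A (m - 1) *v (p - A m *v w)))\<^sup>2)"
  define K where
    "K = (norm (a *v (a *v (a *v w))))\<^sup>2 + (norm (g *v (f *v q)))\<^sup>2 - (norm (a *v (e *v q)))\<^sup>2"
  show thesis
  proof (rule that[folded Y_def])
    fix t :: real
    define x where "x = flat_test_vector m t p w u q"
    define T where "T j = mshift A x j + t *\<^sub>R mshift A (mshift A x) j" for j
    define S where "S k = A k *v x (Suc k) + t *\<^sub>R (A k *v (A (Suc k) *v x (Suc (Suc k))))" for k
    define L where "L = (if m = 0 then {} else {m - 1})"
    define J where "J = {Suc m, Suc (Suc m), Suc (Suc (Suc m)), Suc (Suc (Suc (Suc (Suc (Suc m)))))}"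
    note Tx = mshift_quadratic_flat_test_vector[OF a u p q_def[symmetric, unfolded e_def] x_def T_def,
        folded J_def f_def g_def]
    note S = mshift_adjoint_flat_test_vector[OF a x_def S_def, folded e_def]
    have SL: "(\<Sum>k\<in>L. (norm (S k))\<^sup>2) = t ^ 4 * Y"
    proof (cases m)
      case (Suc n)
      then show ?thesis
        by (simp add: L_def Y_def S(1)[OF Suc] power_mult_distrib flip: power_mult)
    qed (simp add: L_def Y_def)
    have "(\<Sum>k\<in>L \<union> {Suc m, Suc (Suc m), Suc (Suc (Suc m))}. (norm (S k))\<^sup>2)
        \<le> (\<Sum>j\<in>J. (norm (T j))\<^sup>2)"
      unfolding S_def T_def
      by (rule quad_hyponormal_mshift_le[OF herm qh flat_test_vector_eq_0[of m _ t p w u q,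
            folded x_def]]) (auto simp: L_def J_def Tx(5)[unfolded T_def])
    also have "(\<Sum>k\<in>L \<union> {Suc m, Suc (Suc m), Suc (Suc (Suc m))}. (norm (S k))\<^sup>2)
        = (\<Sum>k\<in>L. (norm (S k))\<^sup>2) + (\<Sum>k\<in>{Suc m, Suc (Suc m), Suc (Suc (Suc m))}. (norm (S k))\<^sup>2)"
      by (rule sum.union_disjoint) (auto simp: L_def)
    finally have "t ^ 4 * Y + (norm (S (Suc m)))\<^sup>2 + (norm (S (Suc (Suc m))))\<^sup>2
        + (norm (S (Suc (Suc (Suc m)))))\<^sup>2
      \<le> (norm (T (Suc m)))\<^sup>2 + (norm (T (Suc (Suc m))))\<^sup>2 + (norm (T (Suc (Suc (Suc m)))))\<^sup>2
        + (norm (T (Suc (Suc (Suc (Suc (Suc (Suc m))))))))\<^sup>2"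
      by (simp add: SL J_def)
    moreover have "inner (a *v w) (a *v (e *v (e *v w))) = inner (e *v (e *v w)) (a *v (a *v w))"
      using hermitian_mat_inner[OF herm, of "Suc m" "a *v w" "e *v (e *v w)"]
      by (metis a(1) inner_commute)
    moreover have "inner (a *v w) (a *v (a *v (a *v w))) = (norm (a *v (a *v w)))\<^sup>2"
      using hermitian_mat_inner[OF herm, of "Suc m" "a *v w" "a *v (a *v w)"]
      by (simp add: a power2_norm_eq_inner)
    moreover have "t ^ 4 = t * (t * (t * t))" "t ^ 6 = t * (t * (t * (t * (t * t))))"
      by (simp_all add: numeral_eq_Suc)
    ultimately show "t ^ 4 * (Y + (norm (e *v (e *v w) - a *v (a *v w)))\<^sup>2) \<le> t ^ 6 * K"
      unfolding S(2-4) Tx(1-4) power2_norm_scaleR_add power2_norm_diff K_def norm_scaleR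
        power_mult_distrib power2_abs q_def
      by (simp add: power2_eq_square power3_eq_cube algebra_simps)
  qed
qed

lemma quad_hyponormal_flat_step:
  fixes A :: "nat \<Rightarrow> complex^'p^'p"
  assumes pos: "\<And>n. pos_mat (A n)" and inv: "\<And>n. invertible (A n)"
    and qh: "quad_hyponormal (mshift A)" and eq: "A (Suc m) = A (Suc (Suc m))"
  shows "A (Suc (Suc m)) = A (Suc (Suc (Suc m)))" and "0 < m \<Longrightarrow> A m = A (Suc m)"
proof -
  define a where "a = A (Suc m)"
  define e where "e = A (Suc (Suc (Suc m)))"
  have herm: "\<And>k. hermitian_mat (A k)"
    by (rule pos_mat_hermitian[OF pos])
  have squares: "e *v (e *v w) = a *v (a *v w) \<and> (0 < m \<longrightarrow> A m *v (A m *v w) = a *v (a *v w))"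
    for w
  proof -
    obtain u where u: "a *v u = w"
      using invertible_surj[OF inv[of "Suc m"]] unfolding a_def by blast
    obtain p where p: "A m *v p = a *v (a *v w)"
      using invertible_surj[OF inv[of m]] by blast
    define Y where "Y = (if m = 0 then 0 else (norm (A (m - 1) *v (p - A m *v w)))\<^sup>2)"
    obtain K where "\<And>t::real. t ^ 4 * (Y + (norm (e *v (e *v w) - a *v (a *v w)))\<^sup>2) \<le> t ^ 6 * K"
      using flat_step_estimate[OF herm qh a_def[symmetric] eq[folded a_def, symmetric] u p]
      unfolding Y_def e_def by blast
    then have "Y + (norm (e *v (e *v w) - a *v (a *v w)))\<^sup>2 \<le> 0"
      by (rule nonpos_if_power4_le_power6)
    moreover have "0 \<le> Y"
      by (simp add: Y_def)
    ultimately have Y0: "Y = 0" and "(norm (e *v (e *v w) - a *v (a *v w)))\<^sup>2 = 0"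
      using zero_le_power2[of "norm (e *v (e *v w) - a *v (a *v w))"] by linarith+
    then have "e *v (e *v w) = a *v (a *v w)"
      by simp
    moreover have "A m *v (A m *v w) = a *v (a *v w)" if "0 < m"
    proof -
      have "A (m - 1) *v (p - A m *v w) = 0"
        using Y0 that by (simp add: Y_def)
      then have "p = A m *v w"
        using inj_matrix_vector_mult[OF inv[of "m - 1"]]
        by (metis injD matrix_vector_mult_0_right eq_iff_diff_eq_0)
      then show ?thesis
        using p by simp
    qed
    ultimately show ?thesis
      by blast
  qed
  have "e ** e = a ** a"
    using squares by (simp add: matrix_eq flip: matrix_vector_mul_assoc)
  then have "e = a"
    unfolding a_def e_def by (rule pos_mat_sqrt_unique[OF pos inv pos])
  then show "A (Suc (Suc m)) = A (Suc (Suc (Suc m)))"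
    using eq by (simp add: a_def e_def)
  assume "0 < m"
  then have "A m ** A m = a ** a"
    using squares by (simp add: matrix_eq flip: matrix_vector_mul_assoc)
  then show "A m = A (Suc m)"
    unfolding a_def by (rule pos_mat_sqrt_unique[OF pos inv pos])
qed

lemma constant_from_1_if_equalities_spread:
  fixes A :: "nat \<Rightarrow> 'a"
  assumes forward: "\<And>k. 1 \<le> k \<Longrightarrow> A k = A (Suc k) \<Longrightarrow> A (Suc k) = A (Suc (Suc k))"
    and backward: "\<And>k. 1 \<le> k \<Longrightarrow> A (Suc k) = A (Suc (Suc k)) \<Longrightarrow> A k = A (Suc k)"
    and n: "1 \<le> n" "A n = A (Suc n)"
  shows "\<forall>k\<ge>1. A k = A 1"
proof -
  have flat: "A k = A (Suc k)" if "1 \<le> k" for k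
  proof (cases "n \<le> k")
    case True
    then show ?thesis
    proof (induction rule: dec_induct)
      case (step j)
      then show ?case
        using forward[of j] n by simp
    qed (fact n(2))
  next
    case False
    then have "k \<le> n"
      by simp
    then show ?thesis
    proof (induction rule: inc_induct)
      case (step j)
      then show ?case
        using backward[of j] \<open>1 \<le> k\<close> by simp
    qed (fact n(2))
  qed
  show ?thesis
  proof (intro allI impI)
    fix k :: nat
    assume "1 \<le> k"
    then show "A k = A 1"
    proof (induction rule: nat_induct_at_least)
      case (Suc j)
      then show ?case
        using flat[of j] by metis
    qed simp
  qed
qed

theorem mainTheorem7:
  fixes A :: "nat \<Rightarrow> complex^'p^'p"
  assumes pos: "\<And>n. pos_mat (A n)"
    and inv: "\<And>n. invertible (A n)"
    and bdd: "\<exists>B. \<forall>n. onorm (\<lambda>v. A n *v v) \<le> B"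
    and qh: "quad_hyponormal (mshift A)"
    and eq: "\<exists>n\<ge>1. A n = A (Suc n)"
  shows "\<forall>k\<ge>1. A k = A 1"
proof -
  obtain n where "1 \<le> n" and "A n = A (Suc n)"
    using eq by blast
  note step = quad_hyponormal_flat_step[OF pos inv qh]
  show ?thesis
  proof (rule constant_from_1_if_equalities_spread)
    show "A (Suc k) = A (Suc (Suc k))" if "1 \<le> k" "A k = A (Suc k)" for k
      using step(1)[of "k - 1"] that by simp
    show "A k = A (Suc k)" if "1 \<le> k" "A (Suc k) = A (Suc (Suc k))" for k
      using step(2)[of k] that by simp
  qed fact+
qed

end
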